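(* Let $(A,\mu,\alpha,\beta)$ be a BiHom-associative algebra and $R:A\to A$ an $\alpha\beta$-Rota-Baxter operator. Let $\eta:A\to A$ be an algebra map commuting with $\alpha$, $\beta$ and $R$. Define $x\prec y=\alpha\beta(x)R(\eta(y))$ and $x\succ y=R(x)\alpha\beta\eta(y)$ for $x,y\in A$. Then $(A,\prec,\succ,\alpha^2\beta,\alpha\beta^2\eta)$ is a BiHom-dendriform algebra.
   Context: A BiHom-associative algebra $(A,\mu,\alpha,\beta)$: linear space with bilinear $\mu(x\otimes y)=xy$ and linear maps $\alpha,\beta$ with $\alpha\beta=\beta\alpha$, both multiplicative, and $\alpha(x)(yz)=(xy)\beta(z)$ for all $x,y,z$. An $\alpha\beta$-Rota-Baxter operator is a linear map $R$ commuting with $\alpha$ and $\beta$ such that $R(\alpha\beta(a))R(\alpha\beta(b))=R\big(\alpha\beta(a)R(b)+R(a)\alpha\beta(b)\big)$ for all $a,b$. A BiHom-dendriform algebra $(A,\prec,\succ,\alpha',\beta')$: bilinear $\prec,\succ$ and commuting linear maps $\alpha',\beta'$ multiplicative for both operations such that $(x\prec y)\prec\beta'(z)=\alpha'(x)\prec(y\prec z+y\succ z)$, $(x\succ y)\prec\beta'(z)=\alpha'(x)\succ(y\prec z)$, $\alpha'(x)\succ(y\succ z)=(x\prec y+x\succ y)\succ\beta'(z)$. *)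

theory Defs
  imports Main "HOL.Vector_Spaces"
begin

definition bilinear_op :: "('k::field \<Rightarrow> 'a::ab_group_add \<Rightarrow> 'a) \<Rightarrow> ('a \<Rightarrow> 'a \<Rightarrow> 'a) \<Rightarrow> bool" where
  "bilinear_op s m \<longleftrightarrow> (\<forall>x. Vector_Spaces.linear s s (m x)) \<and> (\<forall>y. Vector_Spaces.linear s s (\<lambda>x. m x y))"

definition multiplicative :: "('a \<Rightarrow> 'a \<Rightarrow> 'a) \<Rightarrow> ('a \<Rightarrow> 'a) \<Rightarrow> bool" where
  "multiplicative m f \<longleftrightarrow> (\<forall>x y. f (m x y) = m (f x) (f y))"

definition BiHom_assoc_alg ::
  "('k::field \<Rightarrow> 'a::ab_group_add \<Rightarrow> 'a) \<Rightarrow> ('a \<Rightarrow> 'a \<Rightarrow> 'a) \<Rightarrow> ('a \<Rightarrow> 'a) \<Rightarrow> ('a \<Rightarrow> 'a) \<Rightarrow> bool" where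
  "BiHom_assoc_alg s mu al be \<longleftrightarrow>
     vector_space s \<and> bilinear_op s mu \<and>
     Vector_Spaces.linear s s al \<and> Vector_Spaces.linear s s be \<and>
     al \<circ> be = be \<circ> al \<and> multiplicative mu al \<and> multiplicative mu be \<and>
     (\<forall>x y z. mu (al x) (mu y z) = mu (mu x y) (be z))"

definition alphabeta_RB_op ::
  "('k::field \<Rightarrow> 'a::ab_group_add \<Rightarrow> 'a) \<Rightarrow> ('a \<Rightarrow> 'a \<Rightarrow> 'a) \<Rightarrow> ('a \<Rightarrow> 'a) \<Rightarrow> ('a \<Rightarrow> 'a) \<Rightarrow> ('a \<Rightarrow> 'a) \<Rightarrow> bool" where
  "alphabeta_RB_op s mu al be R \<longleftrightarrow>
     Vector_Spaces.linear s s R \<and> R \<circ> al = al \<circ> R \<and> R \<circ> be = be \<circ> R \<and>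
     (\<forall>a b. mu (R (al (be a))) (R (al (be b))) =
            R (mu (al (be a)) (R b) + mu (R a) (al (be b))))"

definition algebra_map ::
  "('k::field \<Rightarrow> 'a::ab_group_add \<Rightarrow> 'a) \<Rightarrow> ('a \<Rightarrow> 'a \<Rightarrow> 'a) \<Rightarrow> ('a \<Rightarrow> 'a) \<Rightarrow> bool" where
  "algebra_map s mu f \<longleftrightarrow> Vector_Spaces.linear s s f \<and> multiplicative mu f"

definition BiHom_dendriform ::
  "('k::field \<Rightarrow> 'a::ab_group_add \<Rightarrow> 'a) \<Rightarrow> ('a \<Rightarrow> 'a \<Rightarrow> 'a) \<Rightarrow> ('a \<Rightarrow> 'a \<Rightarrow> 'a) \<Rightarrow> ('a \<Rightarrow> 'a) \<Rightarrow> ('a \<Rightarrow> 'a) \<Rightarrow> bool" where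
  "BiHom_dendriform s l r al be \<longleftrightarrow>
     vector_space s \<and> bilinear_op s l \<and> bilinear_op s r \<and>
     Vector_Spaces.linear s s al \<and> Vector_Spaces.linear s s be \<and>
     al \<circ> be = be \<circ> al \<and>
     multiplicative l al \<and> multiplicative r al \<and> multiplicative l be \<and> multiplicative r be \<and>
     (\<forall>x y z. l (l x y) (be z) = l (al x) (l y z + r y z)) \<and>
     (\<forall>x y z. l (r x y) (be z) = r (al x) (l y z)) \<and>
     (\<forall>x y z. r (al x) (r y z) = r (l x y + r x y) (be z))"

end

theory Submission
  imports Defs
begin

text \<open>The Rota-Baxter identity, applied to the images of \<open>x\<close> and \<open>\<eta> y\<close>, shows that
\<open>R (x \<prec> y + x \<succ> y) = R (\<alpha>\<beta> x) R (\<alpha>\<beta>\<eta> y)\<close>. Since \<open>\<eta>\<close> is a morphism for both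
operations, the same holds after applying \<open>\<eta>\<close>. Each of the three dendriform axioms
then becomes a single instance of BiHom-associativity, once all structure maps
are moved to the outside, which is possible because they commute and are multiplicative.\<close>

lemma bilinear_op_compose:
  assumes "bilinear_op s m" "Vector_Spaces.linear s s f" "Vector_Spaces.linear s s g"
  shows "bilinear_op s (\<lambda>x y. m (f x) (g y))"
  using assms Vector_Spaces.linear_compose[of s s g s "m _"]
    Vector_Spaces.linear_compose[of s s f s "\<lambda>x. m x _"]
  unfolding bilinear_op_def by (simp add: o_def)

locale RB_twisting =
  fixes s :: "'k::field \<Rightarrow> 'a::ab_group_add \<Rightarrow> 'a"
    and mu :: "'a \<Rightarrow> 'a \<Rightarrow> 'a" and al be R eta :: "'a \<Rightarrow> 'a"
  assumes BiHom: "BiHom_assoc_alg s mu al be"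
    and RB: "alphabeta_RB_op s mu al be R"
    and eta: "algebra_map s mu eta"
    and eta_al: "eta \<circ> al = al \<circ> eta" and eta_be: "eta \<circ> be = be \<circ> eta"
    and eta_R: "eta \<circ> R = R \<circ> eta"
begin

abbreviation prec :: "'a \<Rightarrow> 'a \<Rightarrow> 'a" where
  "prec x y \<equiv> mu (al (be x)) (R (eta y))"

abbreviation succ :: "'a \<Rightarrow> 'a \<Rightarrow> 'a" where
  "succ x y \<equiv> mu (R x) (al (be (eta y)))"

lemma linear_maps:
  "vector_space s" "Vector_Spaces.linear s s al" "Vector_Spaces.linear s s be"
  "Vector_Spaces.linear s s R" "Vector_Spaces.linear s s eta"
  using BiHom RB eta by (simp_all add: BiHom_assoc_alg_def alphabeta_RB_op_def algebra_map_def)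

lemma commute [simp]:
  "be (al x) = al (be x)" "R (al x) = al (R x)" "R (be x) = be (R x)"
  "eta (al x) = al (eta x)" "eta (be x) = be (eta x)" "eta (R x) = R (eta x)"
  using BiHom RB eta_al eta_be eta_R
  by (simp_all add: BiHom_assoc_alg_def alphabeta_RB_op_def fun_eq_iff)

lemma multiplicative [simp]:
  "al (mu x y) = mu (al x) (al y)" "be (mu x y) = mu (be x) (be y)"
  "eta (mu x y) = mu (eta x) (eta y)"
  using BiHom eta by (simp_all add: BiHom_assoc_alg_def algebra_map_def multiplicative_def)

lemma eta_add [simp]: "eta (x + y) = eta x + eta y"
  using linear_maps(5) by (simp add: linear_iff)

lemma bihom_assoc: "mu (al x) (mu y z) = mu (mu x y) (be z)"
  using BiHom by (simp add: BiHom_assoc_alg_def)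

lemma R_prec_add_succ: "R (prec x y + succ x y) = mu (al (be (R x))) (al (be (R (eta y))))"
  using RB by (simp add: alphabeta_RB_op_def)

lemma R_eta_prec_add_succ:
  "R (eta (prec x y + succ x y)) = mu (al (be (R (eta x)))) (al (be (R (eta (eta y)))))"
  using R_prec_add_succ[of "eta x" "eta y"] by simp

lemma prec_prec: "prec (prec x y) (al (be (be (eta z)))) = prec (al (al (be x))) (prec y z + succ y z)"
  unfolding R_eta_prec_add_succ
  using bihom_assoc[of "al (al (be (be x)))" "al (be (R (eta y)))" "al (be (R (eta (eta z))))"]
  by simp

lemma prec_succ: "prec (succ x y) (al (be (be (eta z)))) = succ (al (al (be x))) (prec y z)"
  using bihom_assoc[of "al (be (R x))" "al (al (be (be (eta y))))" "al (be (R (eta (eta z))))"]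
  by simp

lemma succ_succ: "succ (al (al (be x))) (succ y z) = succ (prec x y + succ x y) (al (be (be (eta z))))"
  unfolding R_prec_add_succ
  using bihom_assoc[of "al (be (R x))" "al (be (R (eta y)))" "al (al (be (be (eta (eta z)))))"]
  by simp

lemma twisted_maps_linear:
  "Vector_Spaces.linear s s (al \<circ> al \<circ> be)" "Vector_Spaces.linear s s (al \<circ> be \<circ> be \<circ> eta)"
  using linear_maps by (auto intro: Vector_Spaces.linear_compose)

lemma twisted_operations_bilinear: "bilinear_op s prec" "bilinear_op s succ"
proof -
  have "bilinear_op s mu"
    using BiHom by (simp add: BiHom_assoc_alg_def)
  moreover have "Vector_Spaces.linear s s (al \<circ> be)" "Vector_Spaces.linear s s (R \<circ> eta)"
    "Vector_Spaces.linear s s (al \<circ> be \<circ> eta)"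
    using linear_maps by (auto intro: Vector_Spaces.linear_compose)
  ultimately show "bilinear_op s prec" "bilinear_op s succ"
    using bilinear_op_compose linear_maps(4) by (fastforce simp: o_def)+
qed

lemma twisted_maps_commute: "(al \<circ> al \<circ> be) \<circ> (al \<circ> be \<circ> be \<circ> eta) = (al \<circ> be \<circ> be \<circ> eta) \<circ> (al \<circ> al \<circ> be)"
  by (simp add: fun_eq_iff)

lemma twisted_maps_multiplicative:
  "multiplicative prec (al \<circ> al \<circ> be)" "multiplicative succ (al \<circ> al \<circ> be)"
  "multiplicative prec (al \<circ> be \<circ> be \<circ> eta)" "multiplicative succ (al \<circ> be \<circ> be \<circ> eta)"
  by (simp_all add: multiplicative_def)

theorem BiHom_dendriform_twisted:
  "BiHom_dendriform s prec succ (al \<circ> al \<circ> be) (al \<circ> be \<circ> be \<circ> eta)"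
  unfolding BiHom_dendriform_def
  using linear_maps(1) twisted_maps_linear twisted_operations_bilinear twisted_maps_commute
    twisted_maps_multiplicative prec_prec prec_succ succ_succ
  by simp

end

theorem mainTheorem7:
  fixes s :: "'k::field \<Rightarrow> 'a::ab_group_add \<Rightarrow> 'a"
    and mu :: "'a \<Rightarrow> 'a \<Rightarrow> 'a" and al be R eta :: "'a \<Rightarrow> 'a"
  assumes "BiHom_assoc_alg s mu al be"
    and "alphabeta_RB_op s mu al be R"
    and "algebra_map s mu eta"
    and "eta \<circ> al = al \<circ> eta" and "eta \<circ> be = be \<circ> eta" and "eta \<circ> R = R \<circ> eta"
  shows "BiHom_dendriform s
           (\<lambda>x y. mu (al (be x)) (R (eta y)))
           (\<lambda>x y. mu (R x) (al (be (eta y))))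
           (al \<circ> al \<circ> be)
           (al \<circ> be \<circ> be \<circ> eta)"
proof -
  interpret RB_twisting s mu al be R eta
    using assms by unfold_locales
  show ?thesis
    by (fact BiHom_dendriform_twisted)
qed

end
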